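(* Let $d\ge1$ and let $T>0$ (finite), $D\in\{1,\dots,d\}$ and $C>0$ be random variables. Set $\tilde T=T\wedge C$ and $\tilde D=D\,\mathbf 1\{T\le C\}$. Then for all $t\in\mathcal J$: $$B(t)=P(\tilde T<t\mid T\ge t)+\frac{1}{S(t-)}\sum_{j=1}^d\int_{(0,t)}\big(1-a_j(s)-B(s)\big)F_j(ds)$$ and $$\sum_{j=1}^d\int_{(0,t]}\frac{1}{K(u-)}\tilde F_j(du)=P(T\le t\mid C\ge t)+\frac{1}{K(t-)}\int_{(0,t)}\Big(1-P(\tilde T=s,\tilde D=0\mid C=s)-\sum_{j=1}^d\int_{(0,s]}\frac{1}{K(u-)}\tilde F_j(du)\Big)G(ds).$$
   Context: Functions of the event time: - $S(t)=P(T>t)$. - $F_j(t)=P(T\le t,D=j)$. Censoring-time quantities: - $K(t)=P(C>t)$ and $G(t)=P(C\le t)$. Observed quantities: - $\tilde S(t)=P(\tilde T>t)$. - $\tilde F_j(t)=P(\tilde T\le t,\tilde D=j)$ for $j=0,\dots,d$. - $B(t)=\int_{(0,t)}S(s)^{-1}\tilde F_0(ds)$. - $\mathcal J=\{t\ge0:\tilde S(t)>0\}$. The function $a_j(t)=P(\tilde T=t,\tilde D=j\mid T=t,D=j)$ is a measurable function, unique up to $F_j$-null sets, with $P(\tilde T=T,D=j,T\in A)=\int_A a_j\,dF_j$ for all Borel sets $A$. $P(\cdot\mid C=s)$ is a regular conditional probability given $C$. *)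

theory Defs
  imports "HOL-Probability.Probability"
begin

definition leftlim :: "(real \<Rightarrow> real) \<Rightarrow> real \<Rightarrow> real" where
  "leftlim f t = Lim (at_left t) f"

definition subdistr :: "'a measure \<Rightarrow> ('a \<Rightarrow> real) \<Rightarrow> ('a \<Rightarrow> bool) \<Rightarrow> real measure" where
  "subdistr M X P = distr (restrict_space M {\<omega>\<in>space M. P \<omega>}) borel X"

definition Ttil :: "('a \<Rightarrow> real) \<Rightarrow> ('a \<Rightarrow> real) \<Rightarrow> 'a \<Rightarrow> real" where
  "Ttil T C = (\<lambda>\<omega>. min (T \<omega>) (C \<omega>))"

definition Dtil :: "('a \<Rightarrow> real) \<Rightarrow> ('a \<Rightarrow> real) \<Rightarrow> ('a \<Rightarrow> nat) \<Rightarrow> 'a \<Rightarrow> nat" where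
  "Dtil T C D = (\<lambda>\<omega>. if T \<omega> \<le> C \<omega> then D \<omega> else 0)"

definition Sfun :: "'a measure \<Rightarrow> ('a \<Rightarrow> real) \<Rightarrow> real \<Rightarrow> real" where
  "Sfun M T t = \<P>(\<omega> in M. T \<omega> > t)"

definition Kfun :: "'a measure \<Rightarrow> ('a \<Rightarrow> real) \<Rightarrow> real \<Rightarrow> real" where
  "Kfun M C t = \<P>(\<omega> in M. C \<omega> > t)"

definition Fmeas :: "'a measure \<Rightarrow> ('a \<Rightarrow> real) \<Rightarrow> ('a \<Rightarrow> nat) \<Rightarrow> nat \<Rightarrow> real measure" where
  "Fmeas M T D j = subdistr M T (\<lambda>\<omega>. D \<omega> = j)"

definition Ftilmeas :: "'a measure \<Rightarrow> ('a \<Rightarrow> real) \<Rightarrow> ('a \<Rightarrow> real) \<Rightarrow> ('a \<Rightarrow> nat) \<Rightarrow> nat \<Rightarrow> real measure" where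
  "Ftilmeas M T C D j = subdistr M (Ttil T C) (\<lambda>\<omega>. Dtil T C D \<omega> = j)"

definition Gmeas :: "'a measure \<Rightarrow> ('a \<Rightarrow> real) \<Rightarrow> real measure" where
  "Gmeas M C = distr M borel C"

definition Bfun :: "'a measure \<Rightarrow> ('a \<Rightarrow> real) \<Rightarrow> ('a \<Rightarrow> real) \<Rightarrow> ('a \<Rightarrow> nat) \<Rightarrow> real \<Rightarrow> real" where
  "Bfun M T C D t = (LINT s:{0<..<t}|Ftilmeas M T C D 0. 1 / Sfun M T s)"

definition Jset :: "'a measure \<Rightarrow> ('a \<Rightarrow> real) \<Rightarrow> ('a \<Rightarrow> real) \<Rightarrow> real set" where
  "Jset M T C = {t. t \<ge> 0 \<and> \<P>(\<omega> in M. Ttil T C \<omega> > t) > 0}"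

definition is_a_fun :: "'a measure \<Rightarrow> ('a \<Rightarrow> real) \<Rightarrow> ('a \<Rightarrow> real) \<Rightarrow> ('a \<Rightarrow> nat) \<Rightarrow> nat \<Rightarrow> (real \<Rightarrow> real) \<Rightarrow> bool" where
  "is_a_fun M T C D j a \<longleftrightarrow> a \<in> borel_measurable borel \<and> integrable (Fmeas M T D j) a \<and>
     (\<forall>A\<in>sets borel. \<P>(\<omega> in M. Ttil T C \<omega> = T \<omega> \<and> D \<omega> = j \<and> T \<omega> \<in> A)
                       = (LINT s:A|Fmeas M T D j. a s))"

text \<open>Regular conditional probability P(\<cdot> | C = s), given as a family of probability measures
  on the sets of M, measurable in s, disintegrating P along C.\<close>
definition is_rcp :: "'a measure \<Rightarrow> ('a \<Rightarrow> real) \<Rightarrow> (real \<Rightarrow> 'a measure) \<Rightarrow> bool" where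
  "is_rcp M C \<kappa> \<longleftrightarrow> (\<forall>s. prob_space (\<kappa> s) \<and> sets (\<kappa> s) = sets M) \<and>
     (\<forall>E\<in>sets M. (\<lambda>s. measure (\<kappa> s) E) \<in> borel_measurable borel) \<and>
     (\<forall>E\<in>sets M. \<forall>A\<in>sets borel.
        measure M (E \<inter> (C -` A \<inter> space M)) = (LINT s:A|distr M borel C. measure (\<kappa> s) E))"

end

theory Submission
  imports Defs
begin

text \<open>
  Both identities come from one exchange of integrals. Let \<open>\<mu>\<close> be the law of \<open>V\<close> on an
  event \<open>E\<close>, \<open>\<nu>\<close> the law of \<open>Z\<close>, \<open>R\<close> an at-risk relation that is upward closed in its
  second argument, and \<open>\<Lambda>(s)\<close> the integral of \<open>1 / \<nu>{z. R v z}\<close> with respect to \<open>\<mu>(dv)\<close>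
  over \<open>{v. R v s}\<close>. By Fubini, the integral of \<open>\<Lambda>\<close> over \<open>{z < t}\<close> with respect to \<open>\<nu>\<close>
  equals \<open>\<mu>{v. R v t} - \<nu>[t, \<infinity>) \<Lambda>(t)\<close>, and splitting \<open>{Z < t}\<close> along \<open>E\<close> turns this
  into a renewal-type equation for \<open>\<Lambda>(t)\<close>.
  The function \<open>B\<close> is the case \<open>V = C\<close>, \<open>Z = T\<close>, \<open>E = {C < T}\<close>, \<open>R v z = (0 < v < z)\<close>, where
  \<open>P(Z < t, not E)\<close> is expressed through the \<open>a\<^sub>j\<close>; the inverse-probability-of-censoring
  weighted sum is the case \<open>V = T\<close>, \<open>Z = C\<close>, \<open>E = {T \<le> C}\<close>, \<open>R v z = (0 < v \<le> z)\<close>, where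
  that probability is recovered by disintegrating along \<open>C\<close>.
\<close>

section \<open>Sub-distributions and bounded integrands\<close>

lemma (in prob_space) leftlim_prob_greater:
  assumes [measurable]: "X \<in> borel_measurable M"
  shows "leftlim (\<lambda>s. \<P>(\<omega> in M. s < X \<omega>)) t = \<P>(\<omega> in M. t \<le> X \<omega>)"
proof -
  interpret \<nu>: real_distribution "distr M borel X" by simp
  have distr_eq: "measure (distr M borel X) A = \<P>(\<omega> in M. X \<omega> \<in> A)" if "A \<in> sets borel" for A
    using that by (simp add: measure_distr vimage_def Int_def conj_commute)
  have "\<P>(\<omega> in M. s < X \<omega>) = 1 - cdf (distr M borel X) s" for s
    using prob_neg[of "\<lambda>\<omega>. X \<omega> \<le> s"] by (simp add: cdf_def distr_eq not_le)
  moreover have "((\<lambda>s. 1 - cdf (distr M borel X) s) \<longlongrightarrow> 1 - \<P>(\<omega> in M. X \<omega> < t)) (at_left t)"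
    using \<nu>.cdf_at_left[of t] by (intro tendsto_diff tendsto_const) (simp add: distr_eq)
  moreover have "1 - \<P>(\<omega> in M. X \<omega> < t) = \<P>(\<omega> in M. t \<le> X \<omega>)"
    using prob_neg[of "\<lambda>\<omega>. X \<omega> < t"] by (simp add: not_less)
  ultimately show ?thesis
    unfolding leftlim_def by (intro tendsto_Lim) simp_all
qed

lemma set_integral_subdistr:
  fixes f :: "real \<Rightarrow> real"
  assumes X: "X \<in> borel_measurable M" and P: "{\<omega>\<in>space M. P \<omega>} \<in> sets M"
    and f: "f \<in> borel_measurable borel" and A: "A \<in> sets borel"
  shows "(LINT s:A|subdistr M X P. f s) = (\<integral>\<omega>. (if P \<omega> \<and> X \<omega> \<in> A then f (X \<omega>) else 0) \<partial>M)"
proof -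
  have "X \<in> borel_measurable (restrict_space M {\<omega>\<in>space M. P \<omega>})"
    using X by (rule measurable_restrict_space1)
  moreover have "(\<lambda>s. indicator A s *\<^sub>R f s) \<in> borel_measurable borel"
    using f A by measurable
  ultimately have "(LINT s:A|subdistr M X P. f s)
      = integral\<^sup>L (restrict_space M {\<omega>\<in>space M. P \<omega>}) (\<lambda>\<omega>. indicator A (X \<omega>) *\<^sub>R f (X \<omega>))"
    unfolding subdistr_def set_lebesgue_integral_def by (simp add: integral_distr)
  also have "\<dots> = (\<integral>\<omega>. indicator {\<omega>\<in>space M. P \<omega>} \<omega> *\<^sub>R (indicator A (X \<omega>) *\<^sub>R f (X \<omega>)) \<partial>M)"
    by (rule integral_restrict_space) (use P in auto)
  also have "\<dots> = (\<integral>\<omega>. (if P \<omega> \<and> X \<omega> \<in> A then f (X \<omega>) else 0) \<partial>M)"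
    by (rule Bochner_Integration.integral_cong) (auto simp: indicator_def)
  finally show ?thesis .
qed

lemma set_integral_distr_borel:
  fixes f :: "real \<Rightarrow> real"
  assumes "X \<in> borel_measurable M" "f \<in> borel_measurable borel" "A \<in> sets borel"
  shows "(LINT s:A|distr M borel X. f s) = (\<integral>\<omega>. (if X \<omega> \<in> A then f (X \<omega>) else 0) \<partial>M)"
  using assms unfolding set_lebesgue_integral_def
  by (subst integral_distr) (auto simp: indicator_def intro!: Bochner_Integration.integral_cong)

lemma measure_subdistr:
  assumes "X \<in> borel_measurable M" "{\<omega>\<in>space M. P \<omega>} \<in> sets M" "A \<in> sets borel"
  shows "measure (subdistr M X P) A = \<P>(\<omega> in M. P \<omega> \<and> X \<omega> \<in> A)"
  using assms unfolding subdistr_def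
  by (subst measure_distr) (auto intro: measurable_restrict_space1 simp: measure_restrict_space space_restrict_space
      intro!: arg_cong[where f="measure M"])

lemma finite_measure_subdistr:
  assumes "finite_measure M" "X \<in> borel_measurable M" "{\<omega>\<in>space M. P \<omega>} \<in> sets M"
  shows "finite_measure (subdistr M X P)"
  unfolding subdistr_def
  by (intro finite_measure.finite_measure_distr finite_measure_restrict_space
      measurable_restrict_space1 assms)

lemma integrable_bounded:
  fixes f :: "'a \<Rightarrow> real"
  assumes "finite_measure M" "f \<in> borel_measurable M" "\<And>\<omega>. \<omega> \<in> space M \<Longrightarrow> \<bar>f \<omega>\<bar> \<le> c"
  shows "integrable M f"
  by (rule finite_measure.integrable_const_bound[OF assms(1), where B=c]) (use assms in auto)

lemma sum_set_integral_subdistr: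
  fixes f :: "real \<Rightarrow> real" and Y :: "'a \<Rightarrow> 'b"
  assumes M: "finite_measure M" and X: "X \<in> borel_measurable M"
    and Y: "Y \<in> measurable M (count_space UNIV)" and f: "f \<in> borel_measurable borel"
    and A: "A \<in> sets borel" and bounded: "\<And>s. s \<in> A \<Longrightarrow> \<bar>f s\<bar> \<le> c" and "finite I"
  shows "(\<Sum>j\<in>I. LINT s:A|subdistr M X (\<lambda>\<omega>. Y \<omega> = j). f s)
       = (\<integral>\<omega>. (if Y \<omega> \<in> I \<and> X \<omega> \<in> A then f (X \<omega>) else 0) \<partial>M)"
proof -
  have "integrable M (\<lambda>\<omega>. if Y \<omega> = j \<and> X \<omega> \<in> A then f (X \<omega>) else 0)" for j
    by (rule integrable_bounded[OF M, where c="\<bar>c\<bar>"])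
      (use X Y f A bounded in \<open>auto intro: order_trans[OF _ abs_ge_self]\<close>)
  then have "(\<Sum>j\<in>I. LINT s:A|subdistr M X (\<lambda>\<omega>. Y \<omega> = j). f s)
      = (\<integral>\<omega>. (\<Sum>j\<in>I. if Y \<omega> = j \<and> X \<omega> \<in> A then f (X \<omega>) else 0) \<partial>M)"
    using X Y f A by (subst Bochner_Integration.integral_sum) (auto intro!: sum.cong set_integral_subdistr)
  also have "\<dots> = (\<integral>\<omega>. (if Y \<omega> \<in> I \<and> X \<omega> \<in> A then f (X \<omega>) else 0) \<partial>M)"
  proof (intro Bochner_Integration.integral_cong refl)
    fix \<omega> show "(\<Sum>j\<in>I. if Y \<omega> = j \<and> X \<omega> \<in> A then f (X \<omega>) else 0)
        = (if Y \<omega> \<in> I \<and> X \<omega> \<in> A then f (X \<omega>) else 0)"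
      using \<open>finite I\<close> by (cases "X \<omega> \<in> A") simp_all
  qed
  finally show ?thesis .
qed

lemma subdistr_cong:
  assumes "\<And>\<omega>. \<omega> \<in> space M \<Longrightarrow> P \<omega> \<longleftrightarrow> Q \<omega>"
    and "\<And>\<omega>. \<omega> \<in> space M \<Longrightarrow> P \<omega> \<Longrightarrow> X \<omega> = Y \<omega>"
  shows "subdistr M X P = subdistr M Y Q"
proof -
  have eq: "{\<omega>\<in>space M. P \<omega>} = {\<omega>\<in>space M. Q \<omega>}"
    using assms(1) by auto
  show ?thesis
    unfolding subdistr_def eq by (intro distr_cong) (auto simp: space_restrict_space assms)
qed

lemma set_integrable_bounded:
  fixes f :: "real \<Rightarrow> real"
  assumes N: "finite_measure N" "sets N = sets borel" and f: "f \<in> borel_measurable borel"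
    and A: "A \<in> sets borel" and bounded: "\<And>s. s \<in> A \<Longrightarrow> \<bar>f s\<bar> \<le> c"
  shows "set_integrable N A f"
  unfolding set_integrable_def
proof (rule integrable_bounded[OF N(1), where c="\<bar>c\<bar>"])
  show "(\<lambda>s. indicator A s *\<^sub>R f s) \<in> borel_measurable N"
    unfolding measurable_cong_sets[OF N(2) refl] using f A by measurable
  show "\<bar>indicator A s *\<^sub>R f s\<bar> \<le> \<bar>c\<bar>" for s
    using bounded[of s] by (auto simp: indicator_def)
qed

lemma set_integral_diff3:
  fixes f g h :: "real \<Rightarrow> real"
  assumes "set_integrable N A f" "set_integrable N A g" "set_integrable N A h"
  shows "(LINT s:A|N. f s - g s - h s) = (LINT s:A|N. f s) - (LINT s:A|N. g s) - (LINT s:A|N. h s)"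
  using set_integral_diff(2)[OF set_integral_diff(1)[OF assms(1,2)] assms(3)] set_integral_diff(2)[OF assms(1,2)]
  by simp

lemma (in prob_space) prob_split:
  assumes "{\<omega>\<in>space M. P \<omega>} \<in> events" "{\<omega>\<in>space M. Q \<omega>} \<in> events"
  shows "\<P>(\<omega> in M. P \<omega>) = \<P>(\<omega> in M. P \<omega> \<and> Q \<omega>) + \<P>(\<omega> in M. P \<omega> \<and> \<not> Q \<omega>)"
proof -
  have [measurable]: "Measurable.pred M P" "Measurable.pred M Q"
    using assms by (simp_all add: pred_def)
  have "{\<omega>\<in>space M. P \<omega>} = {\<omega>\<in>space M. P \<omega> \<and> Q \<omega>} \<union> {\<omega>\<in>space M. P \<omega> \<and> \<not> Q \<omega>}"
    by auto
  moreover have "prob ({\<omega>\<in>space M. P \<omega> \<and> Q \<omega>} \<union> {\<omega>\<in>space M. P \<omega> \<and> \<not> Q \<omega>})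
      = \<P>(\<omega> in M. P \<omega> \<and> Q \<omega>) + \<P>(\<omega> in M. P \<omega> \<and> \<not> Q \<omega>)"
    by (rule finite_measure_Union) auto
  ultimately show ?thesis
    by simp
qed

lemma (in prob_space) set_integral_one_distr:
  assumes "Z \<in> borel_measurable M" "A \<in> sets borel"
  shows "(LINT s:A|distr M borel Z. 1) = \<P>(\<omega> in M. Z \<omega> \<in> A)"
  using assms by (simp add: set_lebesgue_integral_def measure_distr vimage_def Int_def conj_commute)

lemma (in prob_space) set_integral_distr_positive:
  fixes f :: "real \<Rightarrow> real"
  assumes "Z \<in> borel_measurable M" "\<And>\<omega>. \<omega> \<in> space M \<Longrightarrow> 0 < Z \<omega>" "f \<in> borel_measurable borel"
  shows "(LINT s:{0<..<t}|distr M borel Z. f s) = (LINT s:{..<t}|distr M borel Z. f s)"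
  using assms by (auto simp: set_integral_distr_borel intro!: Bochner_Integration.integral_cong)

section \<open>Integrals against an inverse survival function\<close>

definition inverse_survival_integral ::
    "real measure \<Rightarrow> real measure \<Rightarrow> (real \<Rightarrow> real \<Rightarrow> bool) \<Rightarrow> real \<Rightarrow> real" where
  "inverse_survival_integral \<mu> \<nu> R s = (LINT v:{v. R v s}|\<mu>. 1 / measure \<nu> {z. R v z})"

locale inverse_survival = \<mu>: finite_measure \<mu> + \<nu>: finite_measure \<nu>
  for \<mu> \<nu> :: "real measure" and R :: "real \<Rightarrow> real \<Rightarrow> bool" +
  assumes sets_\<mu>: "sets \<mu> = sets borel" and sets_\<nu>: "sets \<nu> = sets borel"
    and R_measurable: "Measurable.pred (borel \<Otimes>\<^sub>M borel) (\<lambda>(v, z). R v z)"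
    and R_upward: "\<And>v z z'. R v z \<Longrightarrow> z \<le> z' \<Longrightarrow> R v z'"
begin

lemma pred_R[measurable (raw)]:
  assumes "f \<in> borel_measurable N" "g \<in> borel_measurable N"
  shows "Measurable.pred N (\<lambda>x. R (f x) (g x))"
proof -
  have "(\<lambda>x. (f x, g x)) \<in> N \<rightarrow>\<^sub>M borel \<Otimes>\<^sub>M borel"
    using assms by measurable
  from measurable_compose[OF this R_measurable] show ?thesis
    by simp
qed

lemma R_sets: "{v. R v s} \<in> sets borel" "{z. R v z} \<in> sets borel"
proof -
  have "Measurable.pred borel (\<lambda>v. R v s)" "Measurable.pred borel (\<lambda>z. R v z)"
    by measurable
  then show "{v. R v s} \<in> sets borel" "{z. R v z} \<in> sets borel"
    unfolding pred_def space_borel by simp_all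
qed

lemma survival_measurable[measurable]: "(\<lambda>v. measure \<nu> {z. R v z}) \<in> borel_measurable borel"
proof -
  let ?Q = "{x \<in> space (borel \<Otimes>\<^sub>M borel). R (fst x) (snd x)} :: (real \<times> real) set"
  have "?Q \<in> sets (borel \<Otimes>\<^sub>M \<nu>)"
    unfolding sets_pair_measure_cong[OF refl sets_\<nu>] by measurable
  then have "(\<lambda>v. emeasure \<nu> (Pair v -` ?Q)) \<in> borel_measurable borel"
    by (rule \<nu>.measurable_emeasure_Pair)
  then show ?thesis
    by (simp add: measure_def space_pair_measure)
qed

lemma survival_ge: "R v t \<Longrightarrow> measure \<nu> {t..} \<le> measure \<nu> {z. R v z}"
  by (rule \<nu>.finite_measure_mono) (auto intro: R_upward simp: sets_\<nu>)

lemma inverse_survival_integral_measurable[measurable]: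
  "inverse_survival_integral \<mu> \<nu> R \<in> borel_measurable borel"
proof -
  have "(\<lambda>(s, v). indicator {v. R v s} v *\<^sub>R (1 / measure \<nu> {z. R v z})) \<in> borel_measurable (borel \<Otimes>\<^sub>M \<mu>)"
    unfolding measurable_cong_sets[OF sets_pair_measure_cong[OF refl sets_\<mu>] refl] by measurable
  then show ?thesis
    unfolding inverse_survival_integral_def[abs_def] set_lebesgue_integral_def
    by (rule \<mu>.borel_measurable_lebesgue_integral)
qed

lemma inverse_survival_le:
  assumes "0 < measure \<nu> {t..}" "R v s" "s \<le> t"
  shows "1 / measure \<nu> {z. R v z} \<le> 1 / measure \<nu> {t..}"
  using survival_ge[of v t] R_upward[OF assms(2,3)] assms(1) by (auto intro!: divide_left_mono)

lemma set_integrable_inverse_survival: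
  assumes "0 < measure \<nu> {t..}" "s \<le> t"
  shows "set_integrable \<mu> {v. R v s} (\<lambda>v. 1 / measure \<nu> {z. R v z})"
  unfolding set_integrable_def
proof (rule integrable_bounded[OF \<mu>.finite_measure_axioms, where c="1 / measure \<nu> {t..}"])
  show "(\<lambda>v. indicator {v. R v s} v *\<^sub>R (1 / measure \<nu> {z. R v z})) \<in> borel_measurable \<mu>"
    unfolding measurable_cong_sets[OF sets_\<mu> refl] by measurable
  show "\<bar>indicator {v. R v s} v *\<^sub>R (1 / measure \<nu> {z. R v z})\<bar> \<le> 1 / measure \<nu> {t..}" for v
    using inverse_survival_le[OF assms(1) _ assms(2), of v] assms(1) by (auto simp: indicator_def)
qed

lemma inverse_survival_integral_bounded:
  assumes "0 < measure \<nu> {t..}" "s \<le> t"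
  shows "\<bar>inverse_survival_integral \<mu> \<nu> R s\<bar> \<le> measure \<mu> (space \<mu>) / measure \<nu> {t..}"
proof -
  have "\<bar>inverse_survival_integral \<mu> \<nu> R s\<bar> \<le> (\<integral>v. 1 / measure \<nu> {t..} \<partial>\<mu>)"
    unfolding inverse_survival_integral_def set_lebesgue_integral_def
    using set_integrable_inverse_survival[OF assms] inverse_survival_le[OF assms(1) _ assms(2)] assms(1)
    by (intro integral_abs_bound_integral) (auto simp: set_integrable_def indicator_def)
  then show ?thesis by simp
qed

lemma set_integrable_inverse_survival_integral:
  assumes N: "finite_measure N" "sets N = sets borel" and A: "A \<in> sets borel" "A \<subseteq> {..t}"
    and pos: "0 < measure \<nu> {t..}"
  shows "set_integrable N A (inverse_survival_integral \<mu> \<nu> R)"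
  using inverse_survival_integral_bounded[OF pos] A
  by (intro set_integrable_bounded[OF N inverse_survival_integral_measurable A(1)]) auto

lemma integrable_inverse_survival_before:
  assumes pos: "0 < measure \<nu> {t..}"
  shows "integrable (\<mu> \<Otimes>\<^sub>M \<nu>) (\<lambda>(v, y). if y < t \<and> R v y then 1 / measure \<nu> {z. R v z} else 0)"
proof (rule integrable_bounded[where c="1 / measure \<nu> {t..}"])
  show "finite_measure (\<mu> \<Otimes>\<^sub>M \<nu>)"
    by (intro finite_measure_pair_measure \<nu>.finite_measure_axioms \<mu>.finite_measure_axioms)
  show "(\<lambda>(v, y). if y < t \<and> R v y then 1 / measure \<nu> {z. R v z} else 0) \<in> borel_measurable (\<mu> \<Otimes>\<^sub>M \<nu>)"
    unfolding measurable_cong_sets[OF sets_pair_measure_cong[OF sets_\<mu> sets_\<nu>] refl] by measurable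
  show "\<bar>case x of (v, y) \<Rightarrow> if y < t \<and> R v y then 1 / measure \<nu> {z. R v z} else 0\<bar> \<le> 1 / measure \<nu> {t..}"
    for x
    using inverse_survival_le[OF pos, of "fst x" "snd x"] pos by (auto split: prod.split)
qed

lemma integral_inverse_survival_before:
  assumes pos: "0 < measure \<nu> {t..}"
  shows "(\<integral>y. (if y < t \<and> R v y then 1 / measure \<nu> {z. R v z} else 0) \<partial>\<nu>)
       = indicator {v. R v t} v - measure \<nu> {t..} * (indicator {v. R v t} v * (1 / measure \<nu> {z. R v z}))"
proof (cases "R v t")
  case True
  have "{z. R v z} = {y. y < t \<and> R v y} \<union> {t..}"
    using True R_upward by auto
  then have "measure \<nu> {z. R v z} = measure \<nu> {y. y < t \<and> R v y} + measure \<nu> {t..}"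
    by (subst \<nu>.finite_measure_Union[symmetric]) (auto simp: sets_\<nu>)
  moreover have "0 < measure \<nu> {z. R v z}"
    using survival_ge[OF True] pos by simp
  moreover have "(\<integral>y. (if y < t \<and> R v y then 1 / measure \<nu> {z. R v z} else 0) \<partial>\<nu>)
      = (\<integral>y. indicator {y. y < t \<and> R v y} y \<partial>\<nu>) * (1 / measure \<nu> {z. R v z})"
    unfolding integral_mult_left_zero[symmetric]
    by (rule Bochner_Integration.integral_cong) (simp_all add: indicator_def)
  ultimately show ?thesis
    using True by (simp add: sets_\<nu> field_simps)
next
  case False
  then have "(\<lambda>y. if y < t \<and> R v y then 1 / measure \<nu> {z. R v z} else 0) = (\<lambda>_. 0)"
    using R_upward[of v _ t] by fastforce
  then show ?thesis
    using False by simp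
qed

lemma set_integral_inverse_survival_integral:
  assumes pos: "0 < measure \<nu> {t..}"
  shows "(LINT y:{..<t}|\<nu>. inverse_survival_integral \<mu> \<nu> R y)
       = measure \<mu> {v. R v t} - measure \<nu> {t..} * inverse_survival_integral \<mu> \<nu> R t"
proof -
  interpret pair_sigma_finite \<mu> \<nu>
    by (intro pair_sigma_finite.intro \<mu>.sigma_finite_measure_axioms \<nu>.sigma_finite_measure_axioms)
  define h where "h v y = (if y < t \<and> R v y then 1 / measure \<nu> {z. R v z} else 0)" for v y
  have "(LINT y:{..<t}|\<nu>. inverse_survival_integral \<mu> \<nu> R y) = (\<integral>y. (\<integral>v. h v y \<partial>\<mu>) \<partial>\<nu>)"
    unfolding set_lebesgue_integral_def inverse_survival_integral_def
    by (auto simp: h_def indicator_def intro!: Bochner_Integration.integral_cong)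
  also have "\<dots> = (\<integral>v. (\<integral>y. h v y \<partial>\<nu>) \<partial>\<mu>)"
    using integrable_inverse_survival_before[OF pos] unfolding h_def by (rule Fubini_integral)
  also have "\<dots> = (\<integral>v. indicator {v. R v t} v - measure \<nu> {t..} * (indicator {v. R v t} v * (1 / measure \<nu> {z. R v z})) \<partial>\<mu>)"
    unfolding h_def integral_inverse_survival_before[OF pos] ..
  also have "\<dots> = measure \<mu> {v. R v t} - measure \<nu> {t..} * inverse_survival_integral \<mu> \<nu> R t"
  proof -
    have inv: "integrable \<mu> (\<lambda>v. indicator {v. R v t} v * (1 / measure \<nu> {z. R v z}))"
      using set_integrable_inverse_survival[OF pos order_refl] by (simp add: set_integrable_def)
    have ind: "integrable \<mu> (indicator {v. R v t} :: real \<Rightarrow> real)"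
      by (intro integrable_real_indicator) (simp_all add: sets_\<mu> R_sets less_top[symmetric])
    show ?thesis
      unfolding Bochner_Integration.integral_diff[OF ind integrable_mult_right[OF inv]] integral_mult_right_zero
      unfolding inverse_survival_integral_def set_lebesgue_integral_def by (simp add: sets_\<mu>)
  qed
  finally show ?thesis .
qed

end

lemma (in prob_space) inverse_survival_subdistr_distr:
  assumes "V \<in> borel_measurable M" "Z \<in> borel_measurable M" "{\<omega>\<in>space M. E \<omega>} \<in> events"
    and "Measurable.pred (borel \<Otimes>\<^sub>M borel) (\<lambda>(v, z). R v z)" "\<And>v z z'. R v z \<Longrightarrow> z \<le> z' \<Longrightarrow> R v z'"
  shows "inverse_survival (subdistr M V E) (distr M borel Z) R"
  using assms finite_measure_subdistr[OF finite_measure_axioms assms(1,3)]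
  by (intro inverse_survival.intro inverse_survival_axioms.intro finite_measure_distr)
    (simp_all add: subdistr_def)

lemma (in prob_space) inverse_survival_integral_eq:
  fixes V Z :: "'a \<Rightarrow> real" and R :: "real \<Rightarrow> real \<Rightarrow> bool"
  assumes [measurable]: "V \<in> borel_measurable M" "Z \<in> borel_measurable M"
    and E: "{\<omega>\<in>space M. E \<omega>} \<in> events"
    and R_measurable: "Measurable.pred (borel \<Otimes>\<^sub>M borel) (\<lambda>(v, z). R v z)"
    and R_upward: "\<And>v z z'. R v z \<Longrightarrow> z \<le> z' \<Longrightarrow> R v z'"
    and E_R: "\<And>\<omega>. \<omega> \<in> space M \<Longrightarrow> E \<omega> \<Longrightarrow> R (V \<omega>) (Z \<omega>)"
    and pos: "0 < \<P>(\<omega> in M. t \<le> Z \<omega>)"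
  defines "\<Lambda> \<equiv> inverse_survival_integral (subdistr M V E) (distr M borel Z) R"
  shows "\<Lambda> t = \<P>(\<omega> in M. E \<omega> \<and> R (V \<omega>) t \<and> t \<le> Z \<omega>) / \<P>(\<omega> in M. t \<le> Z \<omega>)
      + 1 / \<P>(\<omega> in M. t \<le> Z \<omega>) *
        (\<P>(\<omega> in M. Z \<omega> < t) - \<P>(\<omega> in M. Z \<omega> < t \<and> \<not> E \<omega>) - (LINT z:{..<t}|distr M borel Z. \<Lambda> z))"
proof -
  interpret inverse_survival "subdistr M V E" "distr M borel Z" R
    by (rule inverse_survival_subdistr_distr) (simp_all add: E R_measurable R_upward)
  note [measurable] = E pred_R
  have w: "measure (distr M borel Z) {t..} = \<P>(\<omega> in M. t \<le> Z \<omega>)"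
    by (simp add: measure_distr vimage_def Int_def conj_commute)
  have "measure (subdistr M V E) {v. R v t} = \<P>(\<omega> in M. E \<omega> \<and> R (V \<omega>) t)"
    using R_sets by (simp add: measure_subdistr E)
  also have "\<dots> = \<P>(\<omega> in M. E \<omega> \<and> R (V \<omega>) t \<and> t \<le> Z \<omega>) + \<P>(\<omega> in M. Z \<omega> < t \<and> E \<omega>)"
  proof -
    have "\<P>(\<omega> in M. E \<omega> \<and> R (V \<omega>) t \<and> \<not> t \<le> Z \<omega>) = \<P>(\<omega> in M. Z \<omega> < t \<and> E \<omega>)"
      using E_R R_upward by (intro arg_cong[where f=prob] Collect_cong) (meson less_imp_le not_le)
    then show ?thesis
      using prob_split[of "\<lambda>\<omega>. E \<omega> \<and> R (V \<omega>) t" "\<lambda>\<omega>. t \<le> Z \<omega>"] by simp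
  qed
  finally have "(LINT z:{..<t}|distr M borel Z. \<Lambda> z)
      = \<P>(\<omega> in M. E \<omega> \<and> R (V \<omega>) t \<and> t \<le> Z \<omega>) + \<P>(\<omega> in M. Z \<omega> < t \<and> E \<omega>)
        - \<P>(\<omega> in M. t \<le> Z \<omega>) * \<Lambda> t"
    using set_integral_inverse_survival_integral[of t] pos unfolding w \<Lambda>_def by simp
  moreover have "\<P>(\<omega> in M. Z \<omega> < t) = \<P>(\<omega> in M. Z \<omega> < t \<and> E \<omega>) + \<P>(\<omega> in M. Z \<omega> < t \<and> \<not> E \<omega>)"
    by (rule prob_split) measurable
  ultimately show ?thesis
    using pos by (simp add: field_simps)
qed

section \<open>Disintegration along the censoring time\<close>

locale disintegration = prob_space M for M :: "'a measure" +
  fixes C :: "'a \<Rightarrow> real" and \<kappa> :: "real \<Rightarrow> 'a measure"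
  assumes C_measurable[measurable]: "C \<in> borel_measurable M" and rcp: "is_rcp M C \<kappa>"
begin

lemma kernel_prob_space: "prob_space (\<kappa> s)"
  and sets_kernel: "sets (\<kappa> s) = sets M"
  and kernel_measurable_measure: "E \<in> sets M \<Longrightarrow> (\<lambda>s. measure (\<kappa> s) E) \<in> borel_measurable borel"
  and kernel_disintegrates: "E \<in> sets M \<Longrightarrow> A \<in> sets borel \<Longrightarrow>
        measure M (E \<inter> (C -` A \<inter> space M)) = (LINT s:A|distr M borel C. measure (\<kappa> s) E)"
  using rcp unfolding is_rcp_def by blast+

lemma emeasure_kernel: "emeasure (\<kappa> s) E = measure (\<kappa> s) E"
  using kernel_prob_space by (simp add: prob_space_def finite_measure.emeasure_eq_measure)

lemma space_kernel: "space (\<kappa> s) = space M"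
  using sets_kernel by (rule sets_eq_imp_space_eq)

lemma kernel_measurable: "\<kappa> \<in> borel \<rightarrow>\<^sub>M subprob_algebra M"
proof (rule measurable_subprob_algebra)
  show "subprob_space (\<kappa> s)" for s
    using kernel_prob_space by (rule prob_space_imp_subprob_space)
  show "(\<lambda>s. emeasure (\<kappa> s) A) \<in> borel_measurable borel" if "A \<in> sets M" for A
    unfolding emeasure_kernel using kernel_measurable_measure[OF that] by measurable
qed (rule sets_kernel)

definition graph_kernel :: "real \<Rightarrow> ('a \<times> real) measure" where
  "graph_kernel s = distr (\<kappa> s) (M \<Otimes>\<^sub>M borel) (\<lambda>\<omega>. (\<omega>, s))"

lemma graph_kernel_measurable: "graph_kernel \<in> borel \<rightarrow>\<^sub>M subprob_algebra (M \<Otimes>\<^sub>M borel)"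
  unfolding graph_kernel_def
  by (rule measurable_distr2[where f="\<lambda>s \<omega>. (\<omega>, s)", OF _ kernel_measurable]) measurable

lemma emeasure_graph_kernel:
  assumes "X \<in> sets (M \<Otimes>\<^sub>M borel)"
  shows "emeasure (graph_kernel s) X = measure (\<kappa> s) {\<omega>\<in>space M. (\<omega>, s) \<in> X}"
proof -
  have "(\<lambda>\<omega>. (\<omega>, s)) \<in> \<kappa> s \<rightarrow>\<^sub>M M \<Otimes>\<^sub>M borel"
    unfolding measurable_cong_sets[OF sets_kernel refl] by measurable
  then show ?thesis
    unfolding graph_kernel_def using assms
    by (simp add: emeasure_distr space_kernel emeasure_kernel Int_def conj_commute vimage_def)
qed

lemma emeasure_bind_graph_kernel_Times:
  assumes E: "E \<in> sets M" and B: "B \<in> sets borel"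
  shows "emeasure (distr M borel C \<bind> graph_kernel) (E \<times> B) = measure M (E \<inter> (C -` B \<inter> space M))"
proof -
  have "integrable (distr M borel C) (\<lambda>s. indicator B s * measure (\<kappa> s) E)"
    by (rule integrable_bounded[where c=1])
      (use kernel_measurable_measure[OF E] B prob_space.prob_le_1[OF kernel_prob_space]
        in \<open>auto simp: indicator_def intro: finite_measure_distr\<close>)
  moreover have "emeasure (graph_kernel s) (E \<times> B) = ennreal (indicator B s * measure (\<kappa> s) E)" for s
    using E B sets.sets_into_space[OF E]
    by (auto simp: emeasure_graph_kernel indicator_def intro!: arg_cong[where f="measure (\<kappa> s)"])
  ultimately have "emeasure (distr M borel C \<bind> graph_kernel) (E \<times> B)
      = ennreal (LINT s:B|distr M borel C. measure (\<kappa> s) E)"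
    using E B graph_kernel_measurable
    by (simp add: emeasure_bind[where N="M \<Otimes>\<^sub>M borel"] set_lebesgue_integral_def
        measurable_cong_sets[OF sets_distr refl] nn_integral_eq_integral)
  then show ?thesis
    using kernel_disintegrates[OF E B] by simp
qed

text \<open>
  The defining property of \<open>is_rcp\<close> only covers rectangles \<open>E \<times> B\<close>. Binding the graph kernel
  over the law of \<open>C\<close> turns it into an equality of measures on \<open>M \<Otimes>\<^sub>M borel\<close>, which
  then applies to sets such as \<open>{(\<omega>, s). C \<omega> = s \<and> s < T \<omega>}\<close>.
\<close>

lemma bind_graph_kernel: "distr M borel C \<bind> graph_kernel = distr M (M \<Otimes>\<^sub>M borel) (\<lambda>\<omega>. (\<omega>, C \<omega>))"
proof (rule measure_eqI_generator_eq[OF Int_stable_pair_measure_generator[of M borel],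
      where \<Omega>="space M \<times> UNIV" and A="\<lambda>_. space M \<times> UNIV"])
  have "sets (distr M borel C \<bind> graph_kernel) = sets (M \<Otimes>\<^sub>M borel)"
    by (rule sets_bind[where N="M \<Otimes>\<^sub>M borel"]) (simp_all add: graph_kernel_def)
  then show "sets (distr M borel C \<bind> graph_kernel)
      = sigma_sets (space M \<times> UNIV) {a \<times> b |a b. a \<in> sets M \<and> b \<in> sets borel}"
    by (simp add: sets_pair_measure)
  show "sets (distr M (M \<Otimes>\<^sub>M borel) (\<lambda>\<omega>. (\<omega>, C \<omega>)))
      = sigma_sets (space M \<times> UNIV) {a \<times> b |a b. a \<in> sets M \<and> b \<in> sets borel}"
    by (simp add: sets_pair_measure)
  show "{a \<times> b |a b. a \<in> sets M \<and> b \<in> sets borel} \<subseteq> Pow (space M \<times> UNIV)"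
    using sets.sets_into_space by fastforce
  show "range (\<lambda>_. space M \<times> UNIV) \<subseteq> {a \<times> b |a b. a \<in> sets M \<and> b \<in> sets borel}"
    by (intro subsetI CollectI exI[of _ "space M"] exI[of _ UNIV]) auto
  show "emeasure (distr M borel C \<bind> graph_kernel) (space M \<times> UNIV) \<noteq> \<infinity>"
    by (simp add: emeasure_bind_graph_kernel_Times)
next
  fix X assume "X \<in> {a \<times> b |a b. a \<in> sets M \<and> b \<in> sets (borel :: real measure)}"
  then obtain E B where X: "X = E \<times> B" and E: "E \<in> sets M" and B: "B \<in> sets borel"
    by auto
  have "(\<lambda>\<omega>. (\<omega>, C \<omega>)) -` (E \<times> B) \<inter> space M = E \<inter> (C -` B \<inter> space M)"
    using sets.sets_into_space[OF E] by auto
  then show "emeasure (distr M borel C \<bind> graph_kernel) X = emeasure (distr M (M \<Otimes>\<^sub>M borel) (\<lambda>\<omega>. (\<omega>, C \<omega>))) X"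
    using E B by (simp add: X emeasure_bind_graph_kernel_Times emeasure_distr emeasure_eq_measure)
qed simp

lemma kernel_section_measurable:
  assumes "\<Gamma> \<in> sets (M \<Otimes>\<^sub>M borel)"
  shows "(\<lambda>s. measure (\<kappa> s) {\<omega>\<in>space M. (\<omega>, s) \<in> \<Gamma>}) \<in> borel_measurable borel"
proof -
  have "(\<lambda>s. emeasure (graph_kernel s) \<Gamma>) \<in> borel_measurable borel"
    using measurable_compose[OF graph_kernel_measurable measurable_emeasure_subprob_algebra[OF assms]] .
  moreover have "measure (\<kappa> s) {\<omega>\<in>space M. (\<omega>, s) \<in> \<Gamma>} = enn2real (emeasure (graph_kernel s) \<Gamma>)" for s
    by (simp add: emeasure_graph_kernel[OF assms])
  ultimately show ?thesis
    by simp
qed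

lemma integral_kernel_section:
  assumes \<Gamma>: "\<Gamma> \<in> sets (M \<Otimes>\<^sub>M borel)"
  shows "(\<integral>s. measure (\<kappa> s) {\<omega>\<in>space M. (\<omega>, s) \<in> \<Gamma>} \<partial>distr M borel C)
       = \<P>(\<omega> in M. (\<omega>, C \<omega>) \<in> \<Gamma>)"
proof -
  have "integrable (distr M borel C) (\<lambda>s. measure (\<kappa> s) {\<omega>\<in>space M. (\<omega>, s) \<in> \<Gamma>})"
    by (rule integrable_bounded[where c=1])
      (use kernel_section_measurable[OF \<Gamma>] prob_space.prob_le_1[OF kernel_prob_space]
        in \<open>auto intro: finite_measure_distr\<close>)
  then have "ennreal (\<integral>s. measure (\<kappa> s) {\<omega>\<in>space M. (\<omega>, s) \<in> \<Gamma>} \<partial>distr M borel C)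
      = emeasure (distr M borel C \<bind> graph_kernel) \<Gamma>"
    using \<Gamma> graph_kernel_measurable
    by (simp add: emeasure_bind[where N="M \<Otimes>\<^sub>M borel"] emeasure_graph_kernel
        measurable_cong_sets[OF sets_distr refl] nn_integral_eq_integral)
  also have "\<dots> = \<P>(\<omega> in M. (\<omega>, C \<omega>) \<in> \<Gamma>)"
    unfolding bind_graph_kernel using \<Gamma>
    by (simp add: emeasure_distr emeasure_eq_measure vimage_def Int_def conj_commute)
  finally show ?thesis
    by (simp add: integral_nonneg_AE)
qed

end

section \<open>Censored competing risks\<close>

locale censored_competing_risks = prob_space M for M :: "'a measure" +
  fixes T C :: "'a \<Rightarrow> real" and D :: "'a \<Rightarrow> nat" and d :: nat
  assumes T_measurable[measurable]: "T \<in> borel_measurable M"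
    and C_measurable[measurable]: "C \<in> borel_measurable M"
    and D_measurable[measurable]: "D \<in> measurable M (count_space UNIV)"
    and T_pos: "\<And>\<omega>. \<omega> \<in> space M \<Longrightarrow> 0 < T \<omega>"
    and C_pos: "\<And>\<omega>. \<omega> \<in> space M \<Longrightarrow> 0 < C \<omega>"
    and D_range: "\<And>\<omega>. \<omega> \<in> space M \<Longrightarrow> D \<omega> \<in> {1..d}"
begin

lemma D_nonzero: "\<omega> \<in> space M \<Longrightarrow> D \<omega> \<noteq> 0"
  using D_range by fastforce

lemma Dtil_eq_0_iff: "\<omega> \<in> space M \<Longrightarrow> Dtil T C D \<omega> = 0 \<longleftrightarrow> C \<omega> < T \<omega>"
  using D_nonzero by (auto simp: Dtil_def)

lemma Dtil_in_range_iff: "\<omega> \<in> space M \<Longrightarrow> Dtil T C D \<omega> \<in> {1..d} \<longleftrightarrow> T \<omega> \<le> C \<omega>"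
  using D_range by (auto simp: Dtil_def)

lemma Ttil_measurable[measurable]: "Ttil T C \<in> borel_measurable M"
  unfolding Ttil_def by measurable

lemma Dtil_measurable[measurable]: "Dtil T C D \<in> measurable M (count_space UNIV)"
  unfolding Dtil_def by measurable

lemma leftlim_Sfun: "leftlim (Sfun M T) t = \<P>(\<omega> in M. t \<le> T \<omega>)"
  unfolding Sfun_def[abs_def] by (rule leftlim_prob_greater) simp

lemma leftlim_Kfun: "leftlim (Kfun M C) t = \<P>(\<omega> in M. t \<le> C \<omega>)"
  unfolding Kfun_def[abs_def] by (rule leftlim_prob_greater) simp

lemma inverse_survival_censoring:
  "inverse_survival (subdistr M C (\<lambda>\<omega>. C \<omega> < T \<omega>)) (distr M borel T) (\<lambda>v z. 0 < v \<and> v < z)"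
  by (rule inverse_survival_subdistr_distr) auto

lemma Bfun_eq_inverse_survival_integral:
  "Bfun M T C D = inverse_survival_integral (subdistr M C (\<lambda>\<omega>. C \<omega> < T \<omega>)) (distr M borel T) (\<lambda>v z. 0 < v \<and> v < z)"
proof
  fix s :: real
  have "Ftilmeas M T C D 0 = subdistr M C (\<lambda>\<omega>. C \<omega> < T \<omega>)"
    unfolding Ftilmeas_def
    by (rule subdistr_cong) (auto simp: Ttil_def Dtil_eq_0_iff)
  moreover have "Sfun M T v = measure (distr M borel T) {z. 0 < v \<and> v < z}" if "0 < v" for v
    using that by (simp add: Sfun_def measure_distr vimage_def Int_def conj_commute)
  moreover have "{v. 0 < v \<and> v < s} = {0<..<s}"
    by auto
  ultimately show "Bfun M T C D s = inverse_survival_integral (subdistr M C (\<lambda>\<omega>. C \<omega> < T \<omega>))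
      (distr M borel T) (\<lambda>v z. 0 < v \<and> v < z) s"
    unfolding Bfun_def inverse_survival_integral_def
    by (simp, intro set_lebesgue_integral_cong) (auto simp: subdistr_def)
qed

lemma finite_measure_Fmeas: "finite_measure (Fmeas M T D j)"
  and sets_Fmeas: "sets (Fmeas M T D j) = sets borel"
  unfolding Fmeas_def by (intro finite_measure_subdistr finite_measure_axioms; simp) (simp add: subdistr_def)

lemma Bfun_measurable: "Bfun M T C D \<in> borel_measurable borel"
proof -
  interpret inverse_survival "subdistr M C (\<lambda>\<omega>. C \<omega> < T \<omega>)" "distr M borel T" "\<lambda>v z. 0 < v \<and> v < z"
    by (rule inverse_survival_censoring)
  show ?thesis
    unfolding Bfun_eq_inverse_survival_integral by (rule inverse_survival_integral_measurable)
qed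

lemma Bfun_bounded:
  assumes "0 < \<P>(\<omega> in M. t \<le> T \<omega>)" "s \<le> t"
  shows "\<bar>Bfun M T C D s\<bar> \<le> measure (subdistr M C (\<lambda>\<omega>. C \<omega> < T \<omega>)) UNIV / \<P>(\<omega> in M. t \<le> T \<omega>)"
proof -
  interpret inverse_survival "subdistr M C (\<lambda>\<omega>. C \<omega> < T \<omega>)" "distr M borel T" "\<lambda>v z. 0 < v \<and> v < z"
    by (rule inverse_survival_censoring)
  show ?thesis
    using inverse_survival_integral_bounded[of t s] assms
    by (simp add: Bfun_eq_inverse_survival_integral measure_distr vimage_def Int_def conj_commute subdistr_def)
qed

lemma sum_set_integral_Fmeas:
  fixes f :: "real \<Rightarrow> real"
  assumes "f \<in> borel_measurable borel" "\<And>s. 0 < s \<Longrightarrow> s < t \<Longrightarrow> \<bar>f s\<bar> \<le> c"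
  shows "(\<Sum>j=1..d. LINT s:{0<..<t}|Fmeas M T D j. f s) = (LINT s:{..<t}|distr M borel T. f s)"
proof -
  have "(\<Sum>j=1..d. LINT s:{0<..<t}|Fmeas M T D j. f s)
      = (\<integral>\<omega>. (if D \<omega> \<in> {1..d} \<and> T \<omega> \<in> {0<..<t} then f (T \<omega>) else 0) \<partial>M)"
    unfolding Fmeas_def using assms
    by (intro sum_set_integral_subdistr[where c=c] finite_measure_axioms) auto
  also have "\<dots> = (\<integral>\<omega>. (if T \<omega> \<in> {..<t} then f (T \<omega>) else 0) \<partial>M)"
    using D_range T_pos by (intro Bochner_Integration.integral_cong) auto
  also have "\<dots> = (LINT s:{..<t}|distr M borel T. f s)"
    using assms by (simp add: set_integral_distr_borel)
  finally show ?thesis .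
qed

lemma sum_set_integral_a_fun:
  assumes "\<And>j. j \<in> {1..d} \<Longrightarrow> is_a_fun M T C D j (a j)"
  shows "(\<Sum>j=1..d. LINT s:{0<..<t}|Fmeas M T D j. a j s) = \<P>(\<omega> in M. T \<omega> < t \<and> \<not> C \<omega> < T \<omega>)"
proof -
  have "(\<Sum>j=1..d. LINT s:{0<..<t}|Fmeas M T D j. a j s)
      = (\<Sum>j=1..d. \<P>(\<omega> in M. Ttil T C \<omega> = T \<omega> \<and> D \<omega> = j \<and> T \<omega> \<in> {0<..<t}))"
  proof (intro sum.cong refl)
    fix j :: nat assume "j \<in> {1..d}"
    then have "\<forall>A\<in>sets borel. \<P>(\<omega> in M. Ttil T C \<omega> = T \<omega> \<and> D \<omega> = j \<and> T \<omega> \<in> A)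
        = (LINT s:A|Fmeas M T D j. a j s)"
      using assms by (simp add: is_a_fun_def)
    from this[rule_format, of "{0<..<t}"] show "(LINT s:{0<..<t}|Fmeas M T D j. a j s)
        = \<P>(\<omega> in M. Ttil T C \<omega> = T \<omega> \<and> D \<omega> = j \<and> T \<omega> \<in> {0<..<t})"
      by simp
  qed
  also have "\<dots> = \<P>(\<omega> in M. T \<omega> < t \<and> \<not> C \<omega> < T \<omega>)"
  proof (rule prob_sum[symmetric])
    show "AE \<omega> in M. (\<forall>j\<in>{1..d}. Ttil T C \<omega> = T \<omega> \<and> D \<omega> = j \<and> T \<omega> \<in> {0<..<t}
          \<longrightarrow> T \<omega> < t \<and> \<not> C \<omega> < T \<omega>)
        \<and> (T \<omega> < t \<and> \<not> C \<omega> < T \<omega> \<longrightarrow> (\<exists>!j\<in>{1..d}. Ttil T C \<omega> = T \<omega> \<and> D \<omega> = j \<and> T \<omega> \<in> {0<..<t}))"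
      using D_range T_pos by (intro AE_I2) (auto simp: Ttil_def)
  qed simp_all
  finally show ?thesis .
qed

lemma sum_set_integral_Fmeas_split:
  assumes a: "\<And>j. j \<in> {1..d} \<Longrightarrow> is_a_fun M T C D j (a j)" and pos: "0 < \<P>(\<omega> in M. t \<le> T \<omega>)"
  shows "(\<Sum>j=1..d. LINT s:{0<..<t}|Fmeas M T D j. 1 - a j s - Bfun M T C D s)
      = \<P>(\<omega> in M. T \<omega> < t) - \<P>(\<omega> in M. T \<omega> < t \<and> \<not> C \<omega> < T \<omega>)
        - (LINT s:{..<t}|distr M borel T. Bfun M T C D s)"
proof -
  define c where "c = measure (subdistr M C (\<lambda>\<omega>. C \<omega> < T \<omega>)) UNIV / \<P>(\<omega> in M. t \<le> T \<omega>)"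
  have B_bounded: "\<bar>Bfun M T C D s\<bar> \<le> c" if "s < t" for s
    using Bfun_bounded[OF pos] that by (simp add: c_def)
  note F = finite_measure_Fmeas sets_Fmeas
  have one: "set_integrable (Fmeas M T D j) {0<..<t} (\<lambda>_. 1 :: real)" for j
    by (intro set_integrable_bounded[OF F, where c=1]) auto
  have a_int: "set_integrable (Fmeas M T D j) {0<..<t} (a j)" if "j \<in> {1..d}" for j
    unfolding set_integrable_def using a[OF that] F(2)
    by (intro integrable_mult_indicator) (auto simp: is_a_fun_def)
  have B_int: "set_integrable (Fmeas M T D j) {0<..<t} (Bfun M T C D)" for j
    using B_bounded by (intro set_integrable_bounded[OF F Bfun_measurable, where c=c]) auto
  have "(\<Sum>j=1..d. LINT s:{0<..<t}|Fmeas M T D j. 1 - a j s - Bfun M T C D s)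
      = (\<Sum>j=1..d. (LINT s:{0<..<t}|Fmeas M T D j. 1) - (LINT s:{0<..<t}|Fmeas M T D j. a j s)
        - (LINT s:{0<..<t}|Fmeas M T D j. Bfun M T C D s))"
    using one a_int B_int by (intro sum.cong refl set_integral_diff3) auto
  also have "\<dots> = \<P>(\<omega> in M. T \<omega> < t) - \<P>(\<omega> in M. T \<omega> < t \<and> \<not> C \<omega> < T \<omega>)
        - (LINT s:{..<t}|distr M borel T. Bfun M T C D s)"
  proof -
    have "(\<Sum>j=1..d. LINT s:{0<..<t}|Fmeas M T D j. 1) = \<P>(\<omega> in M. T \<omega> < t)"
      using sum_set_integral_Fmeas[of "\<lambda>_. 1" t 1] by (simp add: set_integral_one_distr)
    moreover have "(\<Sum>j=1..d. LINT s:{0<..<t}|Fmeas M T D j. Bfun M T C D s)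
        = (LINT s:{..<t}|distr M borel T. Bfun M T C D s)"
      using B_bounded by (intro sum_set_integral_Fmeas[OF Bfun_measurable, where c=c]) simp
    moreover note sum_set_integral_a_fun[OF a, of t]
    ultimately show ?thesis
      by (simp add: sum_subtractf)
  qed
  finally show ?thesis .
qed

lemma Bfun_equation:
  assumes a: "\<And>j. j \<in> {1..d} \<Longrightarrow> is_a_fun M T C D j (a j)" and pos: "0 < \<P>(\<omega> in M. t \<le> T \<omega>)"
  shows "Bfun M T C D t = \<P>(\<omega> in M. Ttil T C \<omega> < t \<bar> T \<omega> \<ge> t)
      + 1 / leftlim (Sfun M T) t * (\<Sum>j=1..d. LINT s:{0<..<t}|Fmeas M T D j. 1 - a j s - Bfun M T C D s)"
proof -
  have "Bfun M T C D t = \<P>(\<omega> in M. C \<omega> < T \<omega> \<and> (0 < C \<omega> \<and> C \<omega> < t) \<and> t \<le> T \<omega>) / \<P>(\<omega> in M. t \<le> T \<omega>)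
      + 1 / \<P>(\<omega> in M. t \<le> T \<omega>) * (\<P>(\<omega> in M. T \<omega> < t) - \<P>(\<omega> in M. T \<omega> < t \<and> \<not> C \<omega> < T \<omega>)
        - (LINT s:{..<t}|distr M borel T. Bfun M T C D s))"
    unfolding Bfun_eq_inverse_survival_integral
    by (rule inverse_survival_integral_eq) (use pos C_pos in auto)
  moreover have "\<P>(\<omega> in M. Ttil T C \<omega> < t \<bar> T \<omega> \<ge> t)
      = \<P>(\<omega> in M. C \<omega> < T \<omega> \<and> (0 < C \<omega> \<and> C \<omega> < t) \<and> t \<le> T \<omega>) / \<P>(\<omega> in M. t \<le> T \<omega>)"
    unfolding cond_prob_def using C_pos
    by (intro arg_cong2[where f="(/)"] arg_cong[where f=prob] Collect_cong) (auto simp: Ttil_def)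
  moreover have "(\<Sum>j=1..d. LINT s:{0<..<t}|Fmeas M T D j. 1 - a j s - Bfun M T C D s)
      = \<P>(\<omega> in M. T \<omega> < t) - \<P>(\<omega> in M. T \<omega> < t \<and> \<not> C \<omega> < T \<omega>)
        - (LINT s:{..<t}|distr M borel T. Bfun M T C D s)"
    by (rule sum_set_integral_Fmeas_split[OF a pos])
  ultimately show ?thesis
    unfolding leftlim_Sfun by simp
qed

lemma inverse_survival_event:
  "inverse_survival (subdistr M T (\<lambda>\<omega>. T \<omega> \<le> C \<omega>)) (distr M borel C) (\<lambda>v z. 0 < v \<and> v \<le> z)"
  by (rule inverse_survival_subdistr_distr) auto

lemma sum_set_integral_Ftilmeas:
  assumes pos: "0 < \<P>(\<omega> in M. t \<le> C \<omega>)" and "s \<le> t"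
  shows "(\<Sum>j=1..d. LINT u:{0<..s}|Ftilmeas M T C D j. 1 / leftlim (Kfun M C) u)
      = inverse_survival_integral (subdistr M T (\<lambda>\<omega>. T \<omega> \<le> C \<omega>)) (distr M borel C) (\<lambda>v z. 0 < v \<and> v \<le> z) s"
proof -
  interpret inverse_survival "subdistr M T (\<lambda>\<omega>. T \<omega> \<le> C \<omega>)" "distr M borel C" "\<lambda>v z. 0 < v \<and> v \<le> z"
    by (rule inverse_survival_event)
  define W where "W u = measure (distr M borel C) {z. 0 < u \<and> u \<le> z}" for u
  have W_measurable[measurable]: "W \<in> borel_measurable borel"
    unfolding W_def[abs_def] by (rule survival_measurable)
  have w: "measure (distr M borel C) {t..} = \<P>(\<omega> in M. t \<le> C \<omega>)"
    by (simp add: measure_distr vimage_def Int_def conj_commute)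
  have "leftlim (Kfun M C) u = W u" if "0 < u" for u
    using that by (simp add: leftlim_Kfun W_def measure_distr vimage_def Int_def conj_commute)
  then have "(\<Sum>j=1..d. LINT u:{0<..s}|Ftilmeas M T C D j. 1 / leftlim (Kfun M C) u)
      = (\<Sum>j=1..d. LINT u:{0<..s}|Ftilmeas M T C D j. 1 / W u)"
    by (intro sum.cong refl set_lebesgue_integral_cong) (auto simp: Ftilmeas_def subdistr_def)
  also have "\<dots> = (\<integral>\<omega>. (if Dtil T C D \<omega> \<in> {1..d} \<and> Ttil T C \<omega> \<in> {0<..s} then 1 / W (Ttil T C \<omega>) else 0) \<partial>M)"
    unfolding Ftilmeas_def
  proof (rule sum_set_integral_subdistr[OF finite_measure_axioms, where c="1 / \<P>(\<omega> in M. t \<le> C \<omega>)"])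
    show "\<bar>1 / W u\<bar> \<le> 1 / \<P>(\<omega> in M. t \<le> C \<omega>)" if "u \<in> {0<..s}" for u
      using inverse_survival_le[of t u s] pos that \<open>s \<le> t\<close> by (simp add: w W_def)
  qed simp_all
  also have "\<dots> = (\<integral>\<omega>. (if T \<omega> \<le> C \<omega> \<and> T \<omega> \<in> {v. 0 < v \<and> v \<le> s} then 1 / W (T \<omega>) else 0) \<partial>M)"
  proof (intro Bochner_Integration.integral_cong refl)
    fix \<omega> assume "\<omega> \<in> space M"
    then show "(if Dtil T C D \<omega> \<in> {1..d} \<and> Ttil T C \<omega> \<in> {0<..s} then 1 / W (Ttil T C \<omega>) else 0)
        = (if T \<omega> \<le> C \<omega> \<and> T \<omega> \<in> {v. 0 < v \<and> v \<le> s} then 1 / W (T \<omega>) else 0)"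
      using Dtil_in_range_iff[of \<omega>] T_pos[of \<omega>] by (auto simp: Ttil_def)
  qed
  also have "\<dots> = inverse_survival_integral (subdistr M T (\<lambda>\<omega>. T \<omega> \<le> C \<omega>)) (distr M borel C) (\<lambda>v z. 0 < v \<and> v \<le> z) s"
    unfolding inverse_survival_integral_def W_def by (rule set_integral_subdistr[symmetric]) simp_all
  finally show ?thesis .
qed

lemma censoring_event_eq:
  "{\<omega>\<in>space M. Ttil T C \<omega> = s \<and> Dtil T C D \<omega> = 0} = {\<omega>\<in>space M. C \<omega> = s \<and> s < T \<omega>}"
  using Dtil_eq_0_iff by (auto simp: Ttil_def)

lemma kernel_censoring_measurable:
  assumes "is_rcp M C \<kappa>"
  shows "(\<lambda>s. measure (\<kappa> s) {\<omega>\<in>space M. Ttil T C \<omega> = s \<and> Dtil T C D \<omega> = 0}) \<in> borel_measurable borel"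
proof -
  interpret disintegration M C \<kappa>
    by unfold_locales (simp_all add: assms)
  have "{x \<in> space (M \<Otimes>\<^sub>M borel). C (fst x) = snd x \<and> snd x < T (fst x)} \<in> sets (M \<Otimes>\<^sub>M borel)"
    by measurable
  from kernel_section_measurable[OF this] show ?thesis
    by (simp add: censoring_event_eq space_pair_measure)
qed

lemma set_integral_kernel_censoring:
  assumes "is_rcp M C \<kappa>"
  shows "(LINT s:{0<..<t}|Gmeas M C. measure (\<kappa> s) {\<omega>\<in>space M. Ttil T C \<omega> = s \<and> Dtil T C D \<omega> = 0})
      = \<P>(\<omega> in M. C \<omega> < t \<and> \<not> T \<omega> \<le> C \<omega>)"
proof -
  interpret disintegration M C \<kappa>
    by unfold_locales (simp_all add: assms)
  define \<Gamma> where "\<Gamma> = {x \<in> space (M \<Otimes>\<^sub>M borel). C (fst x) = snd x \<and> snd x < T (fst x) \<and> 0 < snd x \<and> snd x < t}"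
  have "\<Gamma> \<in> sets (M \<Otimes>\<^sub>M borel)"
    unfolding \<Gamma>_def by measurable
  moreover have "indicator {0<..<t} s * measure (\<kappa> s) {\<omega>\<in>space M. Ttil T C \<omega> = s \<and> Dtil T C D \<omega> = 0}
      = measure (\<kappa> s) {\<omega>\<in>space M. (\<omega>, s) \<in> \<Gamma>}" for s
    by (cases "0 < s \<and> s < t") (auto simp: censoring_event_eq \<Gamma>_def space_pair_measure indicator_def)
  moreover have "{\<omega>\<in>space M. (\<omega>, C \<omega>) \<in> \<Gamma>} = {\<omega>\<in>space M. C \<omega> < t \<and> \<not> T \<omega> \<le> C \<omega>}"
    using C_pos by (auto simp: \<Gamma>_def space_pair_measure)
  ultimately show ?thesis
    using integral_kernel_section[of \<Gamma>] by (simp add: set_lebesgue_integral_def Gmeas_def)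
qed

lemma set_integrable_kernel_censoring:
  assumes "is_rcp M C \<kappa>"
  shows "set_integrable (Gmeas M C) {0<..<t}
      (\<lambda>s. measure (\<kappa> s) {\<omega>\<in>space M. Ttil T C \<omega> = s \<and> Dtil T C D \<omega> = 0})"
  using assms
  by (intro set_integrable_bounded[OF _ _ kernel_censoring_measurable[OF assms], where c=1])
    (simp_all add: Gmeas_def finite_measure_distr is_rcp_def prob_space.prob_le_1)

lemma set_integral_Gmeas_split:
  assumes rcp: "is_rcp M C \<kappa>" and pos: "0 < \<P>(\<omega> in M. t \<le> C \<omega>)"
  defines "\<Lambda> \<equiv> inverse_survival_integral (subdistr M T (\<lambda>\<omega>. T \<omega> \<le> C \<omega>)) (distr M borel C) (\<lambda>v z. 0 < v \<and> v \<le> z)"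
  shows "(LINT s:{0<..<t}|Gmeas M C.
            1 - measure (\<kappa> s) {\<omega>\<in>space M. Ttil T C \<omega> = s \<and> Dtil T C D \<omega> = 0}
              - (\<Sum>j=1..d. LINT u:{0<..s}|Ftilmeas M T C D j. 1 / leftlim (Kfun M C) u))
      = \<P>(\<omega> in M. C \<omega> < t) - \<P>(\<omega> in M. C \<omega> < t \<and> \<not> T \<omega> \<le> C \<omega>) - (LINT s:{..<t}|distr M borel C. \<Lambda> s)"
proof -
  interpret inverse_survival "subdistr M T (\<lambda>\<omega>. T \<omega> \<le> C \<omega>)" "distr M borel C" "\<lambda>v z. 0 < v \<and> v \<le> z"
    by (rule inverse_survival_event)
  define q where "q s = measure (\<kappa> s) {\<omega>\<in>space M. Ttil T C \<omega> = s \<and> Dtil T C D \<omega> = 0}" for s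
  have G: "finite_measure (Gmeas M C)" "sets (Gmeas M C) = sets borel"
    by (simp_all add: Gmeas_def finite_measure_distr)
  have w: "measure (distr M borel C) {t..} = \<P>(\<omega> in M. t \<le> C \<omega>)"
    by (simp add: measure_distr vimage_def Int_def conj_commute)
  have one: "set_integrable (Gmeas M C) {0<..<t} (\<lambda>_. 1 :: real)"
    by (intro set_integrable_bounded[OF G, where c=1]) auto
  have q: "set_integrable (Gmeas M C) {0<..<t} q"
    unfolding q_def[abs_def] by (rule set_integrable_kernel_censoring[OF rcp])
  have \<Lambda>: "set_integrable (Gmeas M C) {0<..<t} \<Lambda>"
    unfolding \<Lambda>_def using pos by (intro set_integrable_inverse_survival_integral[OF G, where t=t]) (auto simp: w)
  have "(LINT s:{0<..<t}|Gmeas M C. 1 - q s - (\<Sum>j=1..d. LINT u:{0<..s}|Ftilmeas M T C D j. 1 / leftlim (Kfun M C) u))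
      = (LINT s:{0<..<t}|Gmeas M C. 1 - q s - \<Lambda> s)"
    using sum_set_integral_Ftilmeas[OF pos less_imp_le]
    by (intro set_lebesgue_integral_cong) (auto simp: G \<Lambda>_def)
  also have "\<dots> = (LINT s:{0<..<t}|Gmeas M C. 1) - (LINT s:{0<..<t}|Gmeas M C. q s) - (LINT s:{0<..<t}|Gmeas M C. \<Lambda> s)"
    by (rule set_integral_diff3[OF one q \<Lambda>])
  also have "\<dots> = \<P>(\<omega> in M. C \<omega> < t) - \<P>(\<omega> in M. C \<omega> < t \<and> \<not> T \<omega> \<le> C \<omega>) - (LINT s:{..<t}|distr M borel C. \<Lambda> s)"
  proof -
    have "\<P>(\<omega> in M. 0 < C \<omega> \<and> C \<omega> < t) = \<P>(\<omega> in M. C \<omega> < t)"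
      using C_pos by (intro arg_cong[where f=prob]) auto
    then show ?thesis
      using C_pos set_integral_kernel_censoring[OF rcp, of t]
      by (simp add: Gmeas_def q_def set_integral_one_distr set_integral_distr_positive \<Lambda>_def)
  qed
  finally show ?thesis
    unfolding q_def .
qed

lemma Ftilmeas_equation:
  assumes rcp: "is_rcp M C \<kappa>" and pos: "0 < \<P>(\<omega> in M. t \<le> C \<omega>)"
  shows "(\<Sum>j=1..d. LINT u:{0<..t}|Ftilmeas M T C D j. 1 / leftlim (Kfun M C) u)
      = \<P>(\<omega> in M. T \<omega> \<le> t \<bar> C \<omega> \<ge> t)
      + 1 / leftlim (Kfun M C) t *
        (LINT s:{0<..<t}|Gmeas M C.
           1 - measure (\<kappa> s) {\<omega>\<in>space M. Ttil T C \<omega> = s \<and> Dtil T C D \<omega> = 0}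
             - (\<Sum>j=1..d. LINT u:{0<..s}|Ftilmeas M T C D j. 1 / leftlim (Kfun M C) u))"
proof -
  let ?\<Lambda> = "inverse_survival_integral (subdistr M T (\<lambda>\<omega>. T \<omega> \<le> C \<omega>)) (distr M borel C) (\<lambda>v z. 0 < v \<and> v \<le> z)"
  have "?\<Lambda> t = \<P>(\<omega> in M. T \<omega> \<le> C \<omega> \<and> (0 < T \<omega> \<and> T \<omega> \<le> t) \<and> t \<le> C \<omega>) / \<P>(\<omega> in M. t \<le> C \<omega>)
      + 1 / \<P>(\<omega> in M. t \<le> C \<omega>) * (\<P>(\<omega> in M. C \<omega> < t) - \<P>(\<omega> in M. C \<omega> < t \<and> \<not> T \<omega> \<le> C \<omega>)
        - (LINT s:{..<t}|distr M borel C. ?\<Lambda> s))"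
    by (rule inverse_survival_integral_eq) (use pos T_pos in auto)
  moreover have "\<P>(\<omega> in M. T \<omega> \<le> t \<bar> C \<omega> \<ge> t)
      = \<P>(\<omega> in M. T \<omega> \<le> C \<omega> \<and> (0 < T \<omega> \<and> T \<omega> \<le> t) \<and> t \<le> C \<omega>) / \<P>(\<omega> in M. t \<le> C \<omega>)"
    unfolding cond_prob_def using T_pos
    by (intro arg_cong2[where f="(/)"] arg_cong[where f=prob] Collect_cong) auto
  moreover note sum_set_integral_Ftilmeas[OF pos order_refl] set_integral_Gmeas_split[OF rcp pos]
  ultimately show ?thesis
    unfolding leftlim_Kfun by simp
qed

end

theorem lemma3:
  fixes M :: "'a measure" and T C :: "'a \<Rightarrow> real" and D :: "'a \<Rightarrow> nat" and d :: nat
    and a :: "nat \<Rightarrow> real \<Rightarrow> real" and \<kappa> :: "real \<Rightarrow> 'a measure"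
  assumes "prob_space M"
    and "d \<ge> 1"
    and "T \<in> borel_measurable M" and "C \<in> borel_measurable M"
    and "D \<in> measurable M (count_space UNIV)"
    and "\<And>\<omega>. \<omega> \<in> space M \<Longrightarrow> T \<omega> > 0"
    and "\<And>\<omega>. \<omega> \<in> space M \<Longrightarrow> C \<omega> > 0"
    and "\<And>\<omega>. \<omega> \<in> space M \<Longrightarrow> D \<omega> \<in> {1..d}"
    and "\<And>j. j \<in> {1..d} \<Longrightarrow> is_a_fun M T C D j (a j)"
    and "is_rcp M C \<kappa>"
    and "t \<in> Jset M T C"
  shows "(Bfun M T C D t =
           \<P>(\<omega> in M. Ttil T C \<omega> < t \<bar> T \<omega> \<ge> t)
           + 1 / leftlim (Sfun M T) t *
             (\<Sum>j=1..d. LINT s:{0<..<t}|Fmeas M T D j. 1 - a j s - Bfun M T C D s))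
         \<and> ((\<Sum>j=1..d. LINT u:{0<..t}|Ftilmeas M T C D j. 1 / leftlim (Kfun M C) u) =
           \<P>(\<omega> in M. T \<omega> \<le> t \<bar> C \<omega> \<ge> t)
           + 1 / leftlim (Kfun M C) t *
             (LINT s:{0<..<t}|Gmeas M C.
                1 - measure (\<kappa> s) {\<omega>\<in>space M. Ttil T C \<omega> = s \<and> Dtil T C D \<omega> = 0}
                  - (\<Sum>j=1..d. LINT u:{0<..s}|Ftilmeas M T C D j. 1 / leftlim (Kfun M C) u)))"
proof -
  interpret censored_competing_risks M T C D d
    by (intro censored_competing_risks.intro censored_competing_risks_axioms.intro assms(1)) (use assms in auto)
  have "0 < \<P>(\<omega> in M. t < Ttil T C \<omega>)"
    using assms(11) by (simp add: Jset_def)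
  moreover have "\<P>(\<omega> in M. t < Ttil T C \<omega>) \<le> \<P>(\<omega> in M. t \<le> T \<omega>)"
    and "\<P>(\<omega> in M. t < Ttil T C \<omega>) \<le> \<P>(\<omega> in M. t \<le> C \<omega>)"
    by (auto simp: Ttil_def intro!: finite_measure_mono)
  ultimately have "0 < \<P>(\<omega> in M. t \<le> T \<omega>)" and "0 < \<P>(\<omega> in M. t \<le> C \<omega>)"
    by linarith+
  then show ?thesis
    using Bfun_equation[OF assms(9)] Ftilmeas_equation[OF assms(10)] by (intro conjI)
qed

end
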